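(* Let $d\in\mathbb N$, $Q,K\in\mathbb R^{d\times d}$, $A:=K^\top Q/\sqrt d$, $V=I_d$ (so $k=d$), and let $f$ be self-attention with parameters $(A,V)$. Assume $A$ has at least one real eigenvalue; let $\gamma_1\ge\dots\ge\gamma_\delta$ be its real eigenvalues and $\gamma:=\max(-\gamma_\delta,\gamma_1/8)$, and assume $\gamma>0$. Let $R\mapsto n(R)\in\mathbb N$ satisfy $n(R)\sim_{R\to+\infty}\exp(2\gamma R^2)$. Then there exists a function $\theta:[0,+\infty)\to[0,+\infty)$ with $\theta(R)\to1$ as $R\to+\infty$ such that $$\mathrm{Lip}\big(f_{|B_R^{n(R)}}\big)\ge\theta(R)\,\frac{\gamma}{2}\,R^2e^{\gamma R^2}.$$
   Context: For $X=(x_1,\dots,x_n)\in(\mathbb R^d)^n$, $f(X)=\big(V\sum_{j=1}^nP_{ij}x_j\big)_{1\le i\le n}$ with $P_{ij}=\exp(x_i^\top A^\top x_j)/\sum_{l=1}^n\exp(x_i^\top A^\top x_l)$. $B_R$ is the closed ball in $\mathbb R^d$ of center 0, radius $R$; $\mathrm{Lip}(f_{|\mathcal X})=\sup_{X\ne Y\in\mathcal X}\|f(X)-f(Y)\|_F/\|X-Y\|_F$ with the Frobenius norm. $\varphi(R)\sim\psi(R)$ means $\varphi(R)/\psi(R)\to1$. *)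

theory Defs
  imports "HOL-Analysis.Analysis" "HOL-Library.Landau_Symbols"
begin

definition attn_weight :: "real^'d^'d \<Rightarrow> (real^'d) list \<Rightarrow> nat \<Rightarrow> nat \<Rightarrow> real" where
  "attn_weight A X i j =
     exp ((X!i) \<bullet> (transpose A *v (X!j))) /
     (\<Sum>l<length X. exp ((X!i) \<bullet> (transpose A *v (X!l))))"

definition self_attention :: "real^'d^'d \<Rightarrow> real^'d^'k \<Rightarrow> (real^'d) list \<Rightarrow> (real^'k) list" where
  "self_attention A V X =
     map (\<lambda>i. V *v (\<Sum>j<length X. attn_weight A X i j *\<^sub>R (X!j))) [0..<length X]"

definition frob_dist :: "('a::real_normed_vector) list \<Rightarrow> 'a list \<Rightarrow> real" where
  "frob_dist X Y = sqrt (\<Sum>i<length X. (norm (X!i - Y!i))\<^sup>2)"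

text \<open>Lipschitz constant of f restricted to a set S, as a value in [0, +infinity]
  (supremum of difference quotients; 0 if S has fewer than two points).\<close>
definition lip_const :: "('a list \<Rightarrow> ('b::real_normed_vector) list) \<Rightarrow> ('a::real_normed_vector) list set \<Rightarrow> ereal" where
  "lip_const f S = Sup ({0} \<union> {ereal (frob_dist (f X) (f Y) / frob_dist X Y) | X Y. X \<in> S \<and> Y \<in> S \<and> X \<noteq> Y})"

definition ball_seqs :: "nat \<Rightarrow> real \<Rightarrow> (real^'d) list set" where
  "ball_seqs n R = {X. length X = n \<and> set X \<subseteq> cball 0 R}"

definition real_eigenvalues :: "real^'d^'d \<Rightarrow> real set" where
  "real_eigenvalues A = {g. \<exists>v. v \<noteq> 0 \<and> A *v v = g *\<^sub>R v}"

end

theory Submission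
  imports Defs "HOL-Real_Asymp.Real_Asymp"
begin

(* Let u be a unit eigenvector of A for a real eigenvalue l, and consider n = m + 1 tokens:
   one at t u and m at a u, with |a|, |t| <= R.  Each query a u sees a softmax over two points
   of the line R u, so those m outputs all equal g(t) u for an explicit scalar function g, and
   Lip >= sqrt m * |g'(-R)|.  With D = l a (-R - a) and q = m exp(-D) one computes
   g'(-R) = (1 + q + D q) / (1 + q)^2 >= D q / (1 + q)^2.  Taking a = R for l = Min or
   a = -R/2 for l = Max gives D = 2 gamma R^2, so n ~ exp(2 gamma R^2) forces q -> 1, and
   sqrt m * D q / (1 + q)^2 = theta * (gamma/2) R^2 exp(gamma R^2) with
   theta = 4 sqrt q q / (1 + q)^2 -> 1. *)

lemma eigenvectors_independent:
  fixes A :: "real^'d^'d" and v :: "real \<Rightarrow> real^'d"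
  assumes "finite F" and "\<And>g. g \<in> F \<Longrightarrow> v g \<noteq> 0 \<and> A *v v g = g *\<^sub>R v g"
    and "(\<Sum>g\<in>F. c g *\<^sub>R v g) = 0" and "g \<in> F"
  shows "c g = 0"
  using assms
proof (induction F arbitrary: c g rule: finite_induct)
  case empty
  then show ?case by simp
next
  case (insert g\<^sub>0 F)
  have sum0: "c g\<^sub>0 *\<^sub>R v g\<^sub>0 + (\<Sum>g\<in>F. c g *\<^sub>R v g) = 0"
    using insert.hyps insert.prems(2) by simp
  have "A *v (c g\<^sub>0 *\<^sub>R v g\<^sub>0 + (\<Sum>g\<in>F. c g *\<^sub>R v g)) =
      c g\<^sub>0 *\<^sub>R (g\<^sub>0 *\<^sub>R v g\<^sub>0) + (\<Sum>g\<in>F. c g *\<^sub>R (g *\<^sub>R v g))"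
    using insert.prems(1)
    by (simp add: matrix_vector_right_distrib matrix_vector_mult_scaleR
        linear_sum[OF matrix_vector_mul_linear] o_def)
  then have "(\<Sum>g\<in>F. c g *\<^sub>R (g *\<^sub>R v g)) = - (c g\<^sub>0 *\<^sub>R (g\<^sub>0 *\<^sub>R v g\<^sub>0))"
    using sum0 by (simp add: eq_neg_iff_add_eq_0 add.commute)
  moreover have "(\<Sum>g\<in>F. c g *\<^sub>R v g) = - (c g\<^sub>0 *\<^sub>R v g\<^sub>0)"
    using sum0 by (simp add: eq_neg_iff_add_eq_0 add.commute)
  moreover have "(\<Sum>g\<in>F. (c g * (g - g\<^sub>0)) *\<^sub>R v g) =
      (\<Sum>g\<in>F. c g *\<^sub>R (g *\<^sub>R v g)) - g\<^sub>0 *\<^sub>R (\<Sum>g\<in>F. c g *\<^sub>R v g)"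
    by (simp add: scaleR_sum_right sum_subtractf algebra_simps)
  ultimately have "(\<Sum>g\<in>F. (c g * (g - g\<^sub>0)) *\<^sub>R v g) = 0"
    by simp
  then have F0: "c g * (g - g\<^sub>0) = 0" if "g \<in> F" for g
    using insert.IH[of "\<lambda>g. c g * (g - g\<^sub>0)" g] insert.prems(1) that by auto
  have cF: "c g = 0" if "g \<in> F" for g
    using F0[OF that] that insert.hyps(2) by auto
  then have "c g\<^sub>0 = 0"
    using sum0 insert.prems(1)[of g\<^sub>0] by simp
  then show ?case
    using cF insert.prems(3) by auto
qed

lemma finite_real_eigenvalues:
  fixes A :: "real^'d^'d"
  shows "finite (real_eigenvalues A)"
proof (rule ccontr)
  assume "infinite (real_eigenvalues A)"
  then obtain B where B: "finite B" "card B = Suc DIM(real^'d)" "B \<subseteq> real_eigenvalues A"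
    using infinite_arbitrarily_large by blast
  then have "\<forall>g\<in>B. \<exists>v. v \<noteq> 0 \<and> A *v v = g *\<^sub>R v"
    unfolding real_eigenvalues_def by blast
  then have "\<exists>v. \<forall>g\<in>B. v g \<noteq> 0 \<and> A *v v g = g *\<^sub>R v g"
    by (rule bchoice)
  then obtain v where v: "\<And>g. g \<in> B \<Longrightarrow> v g \<noteq> 0 \<and> A *v v g = g *\<^sub>R v g"
    by blast
  have inj: "inj_on v B"
  proof (rule inj_onI)
    fix g h assume gh: "g \<in> B" "h \<in> B" "v g = v h"
    have "g *\<^sub>R v g = A *v v g"
      using v[OF gh(1)] by simp
    also have "\<dots> = h *\<^sub>R v g"
      using v[OF gh(2)] gh(3) by simp
    finally have "(g - h) *\<^sub>R v g = 0"
      by (simp add: scaleR_diff_left)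
    then show "g = h"
      using v[OF gh(1)] by simp
  qed
  have "independent (v ` B)"
  proof (rule independent_if_scalars_zero)
    fix c w assume "(\<Sum>w\<in>v ` B. c w *\<^sub>R w) = 0" "w \<in> v ` B"
    then show "c w = 0"
      using eigenvectors_independent[OF B(1) v, of "c \<circ> v"] by (auto simp: sum.reindex[OF inj])
  qed (use B(1) in simp)
  then have "card (v ` B) \<le> DIM(real^'d)"
    using independent_bound by blast
  then show False
    using B(2) card_image[OF inj] by simp
qed

lemma gamma_attained:
  fixes S :: "real set"
  assumes "finite S" and "S \<noteq> {}"
  obtains l c where "l \<in> S" and "\<bar>c\<bar> \<le> 1" and "l * c * (- 1 - c) = 2 * max (- Min S) (Max S / 8)"
proof (cases "Max S / 8 \<le> - Min S")
  case True
  then have "max (- Min S) (Max S / 8) = - Min S"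
    by simp
  then show ?thesis
    using that[of "Min S" 1] assms by simp
next
  case False
  then have "max (- Min S) (Max S / 8) = Max S / 8"
    by simp
  then show ?thesis
    using that[of "Max S" "- 1 / 2"] assms by simp
qed

lemma lip_const_nonneg: "0 \<le> lip_const f S"
  unfolding lip_const_def by (rule Sup_upper) simp

lemma lip_const_ge_quotient:
  assumes "X \<in> S" "Y \<in> S" "X \<noteq> Y"
  shows "ereal (frob_dist (f X) (f Y) / frob_dist X Y) \<le> lip_const f S"
  unfolding lip_const_def using assms by (intro Sup_upper) blast

lemma frob_dist_self [simp]: "frob_dist X X = 0"
  by (simp add: frob_dist_def)

lemma lip_const_ge_derivative:
  fixes Y :: "real \<Rightarrow> 'a::real_normed_vector list" and g :: "real \<Rightarrow> real"
  assumes \<epsilon>: "\<epsilon> > 0" and Y\<^sub>0: "Y t\<^sub>0 \<in> S"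
    and Y: "\<And>t. t\<^sub>0 < t \<Longrightarrow> t < t\<^sub>0 + \<epsilon> \<Longrightarrow> Y t \<in> S"
    and dist_Y: "\<And>t. t\<^sub>0 < t \<Longrightarrow> t < t\<^sub>0 + \<epsilon> \<Longrightarrow> frob_dist (Y t) (Y t\<^sub>0) = t - t\<^sub>0"
    and dist_fY: "\<And>t. t\<^sub>0 < t \<Longrightarrow> t < t\<^sub>0 + \<epsilon> \<Longrightarrow>
      c * \<bar>g t - g t\<^sub>0\<bar> \<le> frob_dist (f (Y t)) (f (Y t\<^sub>0))"
    and g': "(g has_real_derivative g') (at t\<^sub>0)"
  shows "ereal (c * \<bar>g'\<bar>) \<le> lip_const f S"
proof (rule tendsto_upperbound)
  have "((\<lambda>t. (g t - g t\<^sub>0) / (t - t\<^sub>0)) \<longlongrightarrow> g') (at_right t\<^sub>0)"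
    using g' unfolding has_field_derivative_iff by (rule tendsto_mono[OF at_le, rotated]) simp
  then show "((\<lambda>t. ereal (c * \<bar>(g t - g t\<^sub>0) / (t - t\<^sub>0)\<bar>)) \<longlongrightarrow> ereal (c * \<bar>g'\<bar>)) (at_right t\<^sub>0)"
    by (intro tendsto_intros)
  show "\<forall>\<^sub>F t in at_right t\<^sub>0. ereal (c * \<bar>(g t - g t\<^sub>0) / (t - t\<^sub>0)\<bar>) \<le> lip_const f S"
    unfolding eventually_at_right_field
  proof (intro exI[of _ "t\<^sub>0 + \<epsilon>"] conjI allI impI)
    fix t assume t: "t\<^sub>0 < t" "t < t\<^sub>0 + \<epsilon>"
    then have "Y t \<noteq> Y t\<^sub>0"
      using dist_Y[of t] by force
    then have "ereal (frob_dist (f (Y t)) (f (Y t\<^sub>0)) / frob_dist (Y t) (Y t\<^sub>0)) \<le> lip_const f S"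
      using t Y\<^sub>0 Y by (intro lip_const_ge_quotient) auto
    moreover have "c * \<bar>(g t - g t\<^sub>0) / (t - t\<^sub>0)\<bar> \<le> frob_dist (f (Y t)) (f (Y t\<^sub>0)) / frob_dist (Y t) (Y t\<^sub>0)"
      using t dist_Y[of t] dist_fY[of t] by (simp add: abs_divide divide_right_mono)
    ultimately show "ereal (c * \<bar>(g t - g t\<^sub>0) / (t - t\<^sub>0)\<bar>) \<le> lip_const f S"
      by (meson ereal_less_eq(3) order_trans)
  qed (use \<epsilon> in simp)
qed simp

lemma frob_dist_Cons_replicate:
  "frob_dist (x # replicate m y) (x' # replicate m y') =
     sqrt ((norm (x - x'))\<^sup>2 + real m * (norm (y - y'))\<^sup>2)"
  unfolding frob_dist_def by (simp add: sum.lessThan_Suc_shift del: sum.lessThan_Suc)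

definition softmax_mean :: "real \<Rightarrow> real \<Rightarrow> real \<Rightarrow> real \<Rightarrow> real" where
  "softmax_mean \<kappa> M b t = (exp (\<kappa> * t) * t + M * b) / (exp (\<kappa> * t) + M)"

lemma has_real_derivative_softmax_mean:
  fixes \<kappa> M b t :: real
  assumes "M \<ge> 0"
  defines "q \<equiv> M * exp (- (\<kappa> * t))"
  shows "(softmax_mean \<kappa> M b has_real_derivative (1 + q + \<kappa> * (t - b) * q) / (1 + q)\<^sup>2) (at t)"
proof -
  define e where "e = exp (\<kappa> * t)"
  have e: "e > 0" "e + M > 0"
    using assms by (simp_all add: e_def add_pos_nonneg)
  have "(softmax_mean \<kappa> M b has_real_derivative
      ((\<kappa> * e * t + e) * (e + M) - (e * t + M * b) * (\<kappa> * e)) / (e + M)\<^sup>2) (at t)"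
    unfolding softmax_mean_def[abs_def] e_def using e
    by (auto intro!: derivative_eq_intros simp: e_def power2_eq_square)
  moreover have "((\<kappa> * e * t + e) * (e + M) - (e * t + M * b) * (\<kappa> * e)) / (e + M)\<^sup>2
      = (1 + q + \<kappa> * (t - b) * q) / (1 + q)\<^sup>2"
  proof -
    have q: "q = M / e"
      unfolding q_def e_def by (simp add: exp_minus divide_inverse)
    have "(\<kappa> * e * t + e) * (e + M) - (e * t + M * b) * (\<kappa> * e) = e\<^sup>2 * (1 + q + \<kappa> * (t - b) * q)"
      "(e + M)\<^sup>2 = e\<^sup>2 * (1 + q)\<^sup>2"
      using e unfolding q by (simp_all add: field_simps power2_eq_square)
    then show ?thesis
      using e by simp
  qed
  ultimately show ?thesis by simp
qed

definition attention_pool :: "real^'d^'d \<Rightarrow> (real^'d) list \<Rightarrow> real^'d \<Rightarrow> real^'d" where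
  "attention_pool A X q =
     (\<Sum>x\<leftarrow>X. (exp (q \<bullet> (transpose A *v x)) / (\<Sum>z\<leftarrow>X. exp (q \<bullet> (transpose A *v z)))) *\<^sub>R x)"

lemma sum_list_map_Cons_replicate:
  fixes h :: "'a \<Rightarrow> 'b::real_vector"
  shows "(\<Sum>x\<leftarrow>x # replicate m y. h x) = h x + real m *\<^sub>R h y"
  by (induction m) (simp_all add: algebra_simps)

lemma sum_list_map_eq_sum_nth: "(\<Sum>x\<leftarrow>X. h x) = (\<Sum>j<length X. h (X ! j))"
  by (simp add: sum_list_sum_nth atLeast0LessThan)

lemma self_attention_eq_map_attention_pool:
  "self_attention A V X = map (\<lambda>q. V *v attention_pool A X q) X"
  by (rule nth_equalityI)
    (simp_all add: self_attention_def attn_weight_def attention_pool_def sum_list_map_eq_sum_nth)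

lemma inner_transpose_eigenvector:
  fixes A :: "real^'d^'d"
  assumes "A *v u = l *\<^sub>R u" and "norm u = 1"
  shows "(a *\<^sub>R u) \<bullet> (transpose A *v (s *\<^sub>R u)) = l * a * s"
proof -
  have "(a *\<^sub>R u) \<bullet> (transpose A *v (s *\<^sub>R u)) = ((s *\<^sub>R u) v* A) \<bullet> (a *\<^sub>R u)"
    by (simp add: inner_commute)
  also have "\<dots> = (s *\<^sub>R u) \<bullet> (A *v (a *\<^sub>R u))"
    by (rule dot_lmul_matrix)
  also have "\<dots> = l * a * s * (u \<bullet> u)"
    using assms(1) by (simp add: matrix_vector_mult_scaleR)
  finally show ?thesis
    using assms(2) by (simp add: dot_square_norm)
qed

lemma attention_pool_eigenline:
  fixes A :: "real^'d^'d"
  assumes "A *v u = l *\<^sub>R u" and "norm u = 1"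
  shows "attention_pool A ((t *\<^sub>R u) # replicate m (a *\<^sub>R u)) (a *\<^sub>R u) =
           softmax_mean (l * a) (real m * exp (l * a * a)) a t *\<^sub>R u"
proof -
  define E where "E = exp (l * a * t) + real m * exp (l * a * a)"
  have "attention_pool A ((t *\<^sub>R u) # replicate m (a *\<^sub>R u)) (a *\<^sub>R u) =
      (exp (l * a * t) / E) *\<^sub>R (t *\<^sub>R u) + real m *\<^sub>R ((exp (l * a * a) / E) *\<^sub>R (a *\<^sub>R u))"
    unfolding attention_pool_def sum_list_map_Cons_replicate inner_transpose_eigenvector[OF assms]
    by (simp add: E_def)
  also have "\<dots> = ((exp (l * a * t) * t + real m * exp (l * a * a) * a) / E) *\<^sub>R u"
    by (simp add: scaleR_add_left add_divide_distrib)
  finally show ?thesis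
    by (simp only: softmax_mean_def E_def)
qed

lemma lip_const_self_attention_ge:
  fixes A :: "real^'d^'d" and u :: "real^'d" and m :: nat
  assumes eig: "A *v u = l *\<^sub>R u" and u: "norm u = 1" and R: "R > 0" and a: "\<bar>a\<bar> \<le> R"
  defines "D \<equiv> l * a * (- R - a)"
  defines "q \<equiv> real m * exp (- D)"
  shows "ereal (sqrt (real m) * D * q / (1 + q)\<^sup>2)
           \<le> lip_const (self_attention A (mat 1)) (ball_seqs (Suc m) R)"
proof -
  define Y where "Y t = (t *\<^sub>R u) # replicate m (a *\<^sub>R u)" for t
  define g where "g = softmax_mean (l * a) (real m * exp (l * a * a)) a"
  have Y_ball: "Y t \<in> ball_seqs (Suc m) R" if "\<bar>t\<bar> \<le> R" for t
    using that a u by (auto simp: Y_def ball_seqs_def)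
  have f_Y: "self_attention A (mat 1) (Y t) =
      attention_pool A (Y t) (t *\<^sub>R u) # replicate m (g t *\<^sub>R u)" for t
    unfolding self_attention_eq_map_attention_pool
    by (simp add: Y_def g_def attention_pool_eigenline[OF eig u])
  have "real m * exp (l * a * a) * exp (- (l * a * - R)) = q"
    unfolding q_def D_def by (simp add: exp_add[symmetric] algebra_simps)
  then have g': "(g has_real_derivative (1 + q + D * q) / (1 + q)\<^sup>2) (at (- R))"
    using has_real_derivative_softmax_mean[of "real m * exp (l * a * a)" "l * a" a "- R"]
    unfolding g_def D_def by (simp add: algebra_simps)
  have "ereal (sqrt (real m) * \<bar>(1 + q + D * q) / (1 + q)\<^sup>2\<bar>)
          \<le> lip_const (self_attention A (mat 1)) (ball_seqs (Suc m) R)"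
  proof (rule lip_const_ge_derivative[where Y = Y and g = g, OF _ _ _ _ _ g'])
    show "2 * R > 0" "Y (- R) \<in> ball_seqs (Suc m) R"
      using R by (auto intro: Y_ball)
    fix t assume t: "- R < t" "t < - R + 2 * R"
    then show "Y t \<in> ball_seqs (Suc m) R"
      by (intro Y_ball) simp
    show "frob_dist (Y t) (Y (- R)) = t - - R"
      using t u by (simp add: Y_def frob_dist_Cons_replicate flip: scaleR_add_left)
    have "sqrt (real m) * \<bar>g t - g (- R)\<bar> = sqrt (real m * (norm (g t *\<^sub>R u - g (- R) *\<^sub>R u))\<^sup>2)"
      using u by (simp add: real_sqrt_mult scaleR_diff_left[symmetric])
    also have "\<dots> \<le> frob_dist (self_attention A (mat 1) (Y t)) (self_attention A (mat 1) (Y (- R)))"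
      unfolding f_Y frob_dist_Cons_replicate by simp
    finally show "sqrt (real m) * \<bar>g t - g (- R)\<bar>
        \<le> frob_dist (self_attention A (mat 1) (Y t)) (self_attention A (mat 1) (Y (- R)))" .
  qed
  moreover have "sqrt (real m) * D * q / (1 + q)\<^sup>2 \<le> sqrt (real m) * \<bar>(1 + q + D * q) / (1 + q)\<^sup>2\<bar>"
  proof -
    have "D * q / (1 + q)\<^sup>2 \<le> (1 + q) / (1 + q)\<^sup>2 + D * q / (1 + q)\<^sup>2"
      unfolding q_def by simp
    also have "\<dots> \<le> \<bar>(1 + q + D * q) / (1 + q)\<^sup>2\<bar>"
      by (simp add: add_divide_distrib)
    finally have "sqrt (real m) * (D * q / (1 + q)\<^sup>2) \<le> sqrt (real m) * \<bar>(1 + q + D * q) / (1 + q)\<^sup>2\<bar>"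
      by (rule mult_left_mono) simp
    then show ?thesis
      by (simp add: mult.assoc)
  qed
  ultimately show ?thesis
    by (meson ereal_less_eq(3) order_trans)
qed

lemma tendsto_pred_divide_asymp_equiv:
  fixes n :: "'a \<Rightarrow> nat"
  assumes "(\<lambda>x. real (n x)) \<sim>[F] h" and "filterlim h at_top F"
  shows "((\<lambda>x. real (n x - 1) / h x) \<longlongrightarrow> 1) F"
proof -
  have "\<forall>\<^sub>F x in F. h x \<ge> 1"
    using assms(2) unfolding filterlim_at_top by blast
  then have ratio: "((\<lambda>x. real (n x) / h x) \<longlongrightarrow> 1) F"
    by (intro asymp_equivD_strong[OF assms(1)]) (auto elim: eventually_mono)
  have "((\<lambda>x. real (n x) / h x - inverse (h x)) \<longlongrightarrow> 1 - 0) F"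
    by (intro tendsto_diff ratio tendsto_inverse_0_at_top assms(2))
  moreover have "\<forall>\<^sub>F x in F. real (n x) / h x - inverse (h x) = real (n x - 1) / h x"
    using order_tendstoD(1)[OF ratio zero_less_one]
  proof (rule eventually_mono)
    fix x assume "0 < real (n x) / h x"
    then have "n x \<ge> 1"
      by (cases "n x") auto
    then show "real (n x) / h x - inverse (h x) = real (n x - 1) / h x"
      by (simp add: of_nat_diff divide_inverse left_diff_distrib)
  qed
  ultimately show ?thesis
    by (simp add: tendsto_cong)
qed

lemma lip_const_self_attention_ge_gamma:
  fixes A :: "real^'d^'d" and n :: nat
  assumes l: "l \<in> real_eigenvalues A" and c: "\<bar>c\<bar> \<le> 1" and lc: "l * c * (- 1 - c) = 2 * \<gamma>"
    and R: "R \<ge> 0"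
  defines "q \<equiv> real (n - 1) / exp (2 * \<gamma> * R\<^sup>2)"
  shows "ereal (4 * sqrt q * q / (1 + q)\<^sup>2 * (\<gamma> / 2) * R\<^sup>2 * exp (\<gamma> * R\<^sup>2))
           \<le> lip_const (self_attention A (mat 1)) (ball_seqs n R)"
proof (cases "R = 0 \<or> n = 0")
  case True
  then have "4 * sqrt q * q / (1 + q)\<^sup>2 * (\<gamma> / 2) * R\<^sup>2 * exp (\<gamma> * R\<^sup>2) = 0"
    by (auto simp: q_def)
  then show ?thesis
    using lip_const_nonneg by (metis zero_ereal_def)
next
  case False
  then obtain m where n: "n = Suc m" and R: "R > 0"
    using R not0_implies_Suc by force
  obtain v where v: "v \<noteq> 0" "A *v v = l *\<^sub>R v"
    using l unfolding real_eigenvalues_def by blast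
  define u where "u = (1 / norm v) *\<^sub>R v"
  have u: "norm u = 1" "A *v u = l *\<^sub>R u"
    using v by (simp_all add: u_def matrix_vector_mult_scaleR)
  have a: "\<bar>c * R\<bar> \<le> R"
    using c R by (simp add: abs_mult mult_left_le_one_le)
  have "l * (c * R) * (- R - c * R) = l * c * (- 1 - c) * R\<^sup>2"
    by (simp add: power2_eq_square algebra_simps)
  then have D: "l * (c * R) * (- R - c * R) = 2 * \<gamma> * R\<^sup>2"
    unfolding lc .
  have q: "q = real m * exp (- (2 * \<gamma> * R\<^sup>2))"
    by (simp add: q_def n exp_minus divide_inverse)
  have "sqrt q = sqrt (real m) * exp (- (\<gamma> * R\<^sup>2))"
  proof -
    have "exp (- (2 * \<gamma> * R\<^sup>2)) = (exp (- (\<gamma> * R\<^sup>2)))\<^sup>2"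
      by (simp add: power2_eq_square flip: exp_add)
    then show ?thesis
      unfolding q by (simp add: real_sqrt_mult)
  qed
  then have "4 * sqrt q * q / (1 + q)\<^sup>2 * (\<gamma> / 2) * R\<^sup>2 * exp (\<gamma> * R\<^sup>2)
      = sqrt (real m) * (2 * \<gamma> * R\<^sup>2) * q / (1 + q)\<^sup>2"
    by (simp add: exp_minus field_simps)
  also have "ereal \<dots> \<le> lip_const (self_attention A (mat 1)) (ball_seqs n R)"
    using lip_const_self_attention_ge[OF u(2,1) R a, of m] unfolding D q n .
  finally show ?thesis .
qed

theorem mainTheorem6:
  fixes Q K A :: "real^'d^'d" and n :: "real \<Rightarrow> nat" and \<gamma> :: real
  assumes A_def: "A = (1 / sqrt (real CARD('d))) *\<^sub>R (transpose K ** Q)"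
    and ev_ne: "real_eigenvalues A \<noteq> {}"
    and gamma_def: "\<gamma> = max (- Min (real_eigenvalues A)) (Max (real_eigenvalues A) / 8)"
    and gamma_pos: "\<gamma> > 0"
    and n_asymp: "(\<lambda>R. real (n R)) \<sim>[at_top] (\<lambda>R. exp (2 * \<gamma> * R\<^sup>2))"
  shows "\<exists>\<theta> :: real \<Rightarrow> real.
           (\<forall>R\<ge>0. \<theta> R \<ge> 0) \<and> (\<theta> \<longlongrightarrow> 1) at_top \<and>
           (\<forall>R\<ge>0. lip_const (self_attention A (mat 1 :: real^'d^'d)) (ball_seqs (n R) R)
                    \<ge> ereal (\<theta> R * (\<gamma> / 2) * R\<^sup>2 * exp (\<gamma> * R\<^sup>2)))"
proof -
  \<comment> \<open>The bound holds for every matrix.\<close>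
  obtain l c where l: "l \<in> real_eigenvalues A" and c: "\<bar>c\<bar> \<le> 1"
    and lc: "l * c * (- 1 - c) = 2 * \<gamma>"
    using gamma_attained[OF finite_real_eigenvalues ev_ne] unfolding gamma_def by metis
  define q where "q R = real (n R - 1) / exp (2 * \<gamma> * R\<^sup>2)" for R
  define \<theta> where "\<theta> R = 4 * sqrt (q R) * q R / (1 + q R)\<^sup>2" for R
  have "(q \<longlongrightarrow> 1) at_top"
    unfolding q_def using n_asymp
    by (rule tendsto_pred_divide_asymp_equiv) (use gamma_pos in real_asymp)
  then have "(\<theta> \<longlongrightarrow> 4 * sqrt 1 * 1 / (1 + 1)\<^sup>2) at_top"
    unfolding \<theta>_def by (intro tendsto_intros) auto
  then have "(\<theta> \<longlongrightarrow> 1) at_top"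
    by simp
  moreover have "\<theta> R \<ge> 0" for R
    by (simp add: \<theta>_def q_def)
  moreover have "lip_const (self_attention A (mat 1)) (ball_seqs (n R) R)
      \<ge> ereal (\<theta> R * (\<gamma> / 2) * R\<^sup>2 * exp (\<gamma> * R\<^sup>2))" if "R \<ge> 0" for R
    unfolding \<theta>_def q_def by (rule lip_const_self_attention_ge_gamma[OF l c lc that])
  ultimately show ?thesis
    by blast
qed

end
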